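(* If $(d,p)\in\{(6,1),(10,2),(13,3),(14,3),(17,4)\}$, then $\varphi$ has a unique critical point in the interior of $K$ (namely $\mathbf{z}^*$).
   Context: Let $\tau_j=\binom{d}{p}\binom{p}{j}\binom{d-p}{p-j}$ for $0\le j\le p$. Points of $\mathbb{R}^{4p+1}$ are written $\mathbf{z}=(z,(z_{j00},z_{j01},z_{j10},z_{j11})_{j\in[p]})$, with $z_{0\alpha\alpha}=z-\sum_{j\in[p]}z_{j\alpha\alpha}$ ($\alpha\in\{0,1\}$) and $z_{0\alpha\beta}=\frac12-z-\sum_{j\in[p]}z_{j\alpha\beta}$ ($\alpha\ne\beta$). $K$ is the set of $\mathbf{z}$ with $0\le z\le\frac12$ and $z_{j\alpha\beta}\ge0$ for all $0\le j\le p$, $\alpha,\beta\in\{0,1\}$. $A(\mathbf{z})=p+(d-4p)z+\sum_{j\in[p]}j(z_{j00}+z_{j11}-z_{j01}-z_{j10})$, $B=\frac d2-A$, and $\varphi(\mathbf{z})=A\log A+B\log B+\sum_{0\le j\le p,\ \alpha,\beta\in\{0,1\}}(z_{j\alpha\beta}\log\tau_j-z_{j\alpha\beta}\log z_{j\alpha\beta})$. A critical point is a point of the interior of $K$ where the gradient of $\varphi$ vanishes. $\mathbf{z}^*$ has $z^*=\frac14$ and $z^*_{j\alpha\beta}=\tau_j/(4\binom{d}{p}^2)$. *)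

theory Defs
  imports "HOL-Analysis.Analysis"
begin

text \<open>Points of R^(4p+1) are represented by a real z together with a function
  w :: nat => bool => bool => real, where w j a b is the coordinate z_{j a b}
  for j in {1..p}; the bits a, b in {0,1} are encoded as False = 0, True = 1.
  Values of w outside j in {1..p} are irrelevant.\<close>

definition tau :: "nat \<Rightarrow> nat \<Rightarrow> nat \<Rightarrow> real" where
  "tau d p j = real (d choose p) * real (p choose j) * real ((d - p) choose (p - j))"

definition zc :: "nat \<Rightarrow> real \<Rightarrow> (nat \<Rightarrow> bool \<Rightarrow> bool \<Rightarrow> real) \<Rightarrow> nat \<Rightarrow> bool \<Rightarrow> bool \<Rightarrow> real" where
  "zc p z w j a b =
     (if j = 0 then
        (if a = b then z - (\<Sum>i\<in>{1..p}. w i a b)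
         else 1/2 - z - (\<Sum>i\<in>{1..p}. w i a b))
      else w j a b)"

definition inK :: "nat \<Rightarrow> real \<Rightarrow> (nat \<Rightarrow> bool \<Rightarrow> bool \<Rightarrow> real) \<Rightarrow> bool" where
  "inK p z w \<longleftrightarrow> 0 \<le> z \<and> z \<le> 1/2 \<and> (\<forall>j\<in>{0..p}. \<forall>a b. 0 \<le> zc p z w j a b)"

definition interiorK :: "nat \<Rightarrow> real \<Rightarrow> (nat \<Rightarrow> bool \<Rightarrow> bool \<Rightarrow> real) \<Rightarrow> bool" where
  "interiorK p z w \<longleftrightarrow> (\<exists>e>0. \<forall>z' w'. \<bar>z' - z\<bar> < e \<and>
      (\<forall>j\<in>{1..p}. \<forall>a b. \<bar>w' j a b - w j a b\<bar> < e) \<longrightarrow> inK p z' w')"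

definition Afun :: "nat \<Rightarrow> nat \<Rightarrow> real \<Rightarrow> (nat \<Rightarrow> bool \<Rightarrow> bool \<Rightarrow> real) \<Rightarrow> real" where
  "Afun d p z w = real p + (real d - 4 * real p) * z +
     (\<Sum>j\<in>{1..p}. real j * (w j False False + w j True True - w j False True - w j True False))"

definition Bfun :: "nat \<Rightarrow> nat \<Rightarrow> real \<Rightarrow> (nat \<Rightarrow> bool \<Rightarrow> bool \<Rightarrow> real) \<Rightarrow> real" where
  "Bfun d p z w = real d / 2 - Afun d p z w"

definition phi :: "nat \<Rightarrow> nat \<Rightarrow> real \<Rightarrow> (nat \<Rightarrow> bool \<Rightarrow> bool \<Rightarrow> real) \<Rightarrow> real" where
  "phi d p z w = Afun d p z w * ln (Afun d p z w) + Bfun d p z w * ln (Bfun d p z w) +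
     (\<Sum>j\<in>{0..p}. \<Sum>a\<in>UNIV. \<Sum>b\<in>UNIV.
        zc p z w j a b * ln (tau d p j) - zc p z w j a b * ln (zc p z w j a b))"

definition upd :: "(nat \<Rightarrow> bool \<Rightarrow> bool \<Rightarrow> real) \<Rightarrow> nat \<Rightarrow> bool \<Rightarrow> bool \<Rightarrow> real \<Rightarrow> (nat \<Rightarrow> bool \<Rightarrow> bool \<Rightarrow> real)" where
  "upd w j a b t = w(j := (w j)(a := (w j a)(b := t)))"

text \<open>Critical point: interior point at which the gradient of phi vanishes,
  i.e. all 4p+1 partial derivatives exist and are zero.\<close>
definition critical :: "nat \<Rightarrow> nat \<Rightarrow> real \<Rightarrow> (nat \<Rightarrow> bool \<Rightarrow> bool \<Rightarrow> real) \<Rightarrow> bool" where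
  "critical d p z w \<longleftrightarrow> interiorK p z w \<and>
     ((\<lambda>t. phi d p t w) has_real_derivative 0) (at z) \<and>
     (\<forall>j\<in>{1..p}. \<forall>a b. ((\<lambda>t. phi d p z (upd w j a b t)) has_real_derivative 0) (at (w j a b)))"

end

theory Submission
  imports Defs
begin

text \<open>Put y^2 = A/B at an interior critical point. Stationarity in a coordinate z_jab with
  j >= 1 says that z_jab / z_0ab is tau_j / tau_0 times y^(2j) on the diagonal a = b and times
  y^(-2j) off it. Summing over j shows that z_0ab only depends on whether a = b, and stationarity
  in z links the two values by z_000 y^(4p) = z_001 y^d. Substituting all this into the definition
  of A leaves a single polynomial equation for y. For the five pairs (d, p) this polynomial is
  1 - y times a polynomial that is visibly positive for y > 0, being a combination of terms
  y^k (y - 1)^(2m) with positive coefficients. Hence y = 1, i.e. A = B, and then the coordinates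
  are forced to be those of z*.\<close>

section \<open>Coordinates and the interior of K\<close>

definition diag_sign :: "bool \<Rightarrow> bool \<Rightarrow> real" where
  "diag_sign a b = (if a = b then 1 else -1)"

lemma zc_shift_z:
  "zc p t w i a b = zc p z w i a b + (t - z) * (if i = 0 then diag_sign a b else 0)"
  by (auto simp: zc_def diag_sign_def)

lemma zc_upd:
  assumes "j \<in> {1..p}"
  shows "zc p z (upd w j a b t) i a' b' = zc p z w i a' b' + (t - w j a b) *
     ((if i = j \<and> a' = a \<and> b' = b then 1 else 0) - (if i = 0 \<and> a' = a \<and> b' = b then 1 else 0))"
proof -
  have "(\<Sum>l\<in>{1..p}. upd w j a b t l a' b')
      = (\<Sum>l\<in>{1..p}. w l a' b' + (if l = j \<and> a' = a \<and> b' = b then t - w j a b else 0))"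
    by (intro sum.cong) (auto simp: upd_def)
  also have "\<dots> = (\<Sum>l\<in>{1..p}. w l a' b') + (if a' = a \<and> b' = b then t - w j a b else 0)"
    using assms by (simp add: sum.distrib sum.delta)
  finally show ?thesis
    using assms by (auto simp: zc_def upd_def)
qed

lemma Afun_shift_z: "Afun d p t w = Afun d p z w + (t - z) * (real d - 4 * real p)"
  by (simp add: Afun_def algebra_simps)

lemma Afun_upd:
  assumes "j \<in> {1..p}"
  shows "Afun d p z (upd w j a b t) = Afun d p z w + (t - w j a b) * (real j * diag_sign a b)"
proof -
  let ?g = "\<lambda>w l. real l * (w l False False + w l True True - w l False True - w l True False)"
  have "(\<Sum>l\<in>{1..p}. ?g (upd w j a b t) l)
      = (\<Sum>l\<in>{1..p}. ?g w l + (if l = j then (t - w j a b) * (real j * diag_sign a b) else 0))"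
    by (intro sum.cong refl) (cases a; cases b; simp add: upd_def diag_sign_def algebra_simps)
  then show ?thesis
    using assms by (simp add: Afun_def sum.distrib)
qed

lemma zc_perturb_bound:
  assumes z: "\<bar>z' - z\<bar> < e" and w: "\<forall>j\<in>{1..p}. \<forall>a b. \<bar>w' j a b - w j a b\<bar> < e"
    and j: "j \<in> {0..p}"
  shows "\<bar>zc p z' w' j a b - zc p z w j a b\<bar> \<le> (real p + 1) * e"
proof (cases "j = 0")
  case True
  have "\<bar>(\<Sum>l\<in>{1..p}. w' l a b) - (\<Sum>l\<in>{1..p}. w l a b)\<bar>
      \<le> (\<Sum>l\<in>{1..p}. \<bar>w' l a b - w l a b\<bar>)"
    by (metis sum_abs sum_subtractf)
  also have "\<dots> \<le> (\<Sum>l\<in>{1..p}. e)"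
    using w by (intro sum_mono) (simp add: less_imp_le)
  finally show ?thesis
    using True z by (auto simp: zc_def algebra_simps abs_diff_le_iff)
next
  case False
  then have "\<bar>w' j a b - w j a b\<bar> < e" "0 \<le> real p * e"
    using j w z by auto
  moreover have "zc p z' w' j a b - zc p z w j a b = w' j a b - w j a b"
    using False by (simp add: zc_def)
  ultimately show ?thesis
    by (simp only: distrib_right mult_1_left)
qed

lemma interiorK_imp_pos:
  assumes "interiorK p z w"
  shows "0 < z \<and> z < 1/2 \<and> (\<forall>j\<in>{0..p}. \<forall>a b. 0 < zc p z w j a b)"
proof -
  obtain e where e: "e > 0" and K: "\<And>z' w'. \<bar>z' - z\<bar> < e \<Longrightarrow>
      \<forall>j\<in>{1..p}. \<forall>a b. \<bar>w' j a b - w j a b\<bar> < e \<Longrightarrow> inK p z' w'"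
    using assms unfolding interiorK_def by blast
  have lo: "inK p (z - e/2) w" and hi: "inK p (z + e/2) w"
    using e by (auto intro!: K)
  have "0 < zc p z w j a b" if j: "j \<in> {0..p}" for j a b
  proof (cases "j = 0")
    case True
    have "0 \<le> zc p (z - e/2) w 0 a b" "0 \<le> zc p (z + e/2) w 0 a b"
      using lo hi by (auto simp: inK_def)
    moreover have "zc p (z - e/2) w 0 a b = zc p z w 0 a b - e/2 * diag_sign a b"
      and "zc p (z + e/2) w 0 a b = zc p z w 0 a b + e/2 * diag_sign a b"
      by (simp_all add: zc_shift_z[of p "z - e/2" w 0 a b z] zc_shift_z[of p "z + e/2" w 0 a b z])
    ultimately show ?thesis
      using True e by (cases "a = b") (auto simp: diag_sign_def)
  next
    case False
    with j have j1: "j \<in> {1..p}" by auto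
    have "inK p z (upd w j a b (w j a b - e/2))"
      using e by (intro K) (auto simp: upd_def)
    then have "0 \<le> zc p z (upd w j a b (w j a b - e/2)) j a b"
      using j by (simp add: inK_def)
    with j1 e False show ?thesis by (simp add: zc_upd)
  qed
  with lo hi e show ?thesis by (auto simp: inK_def)
qed

lemma pos_imp_interiorK:
  assumes "0 < z" "z < 1/2" "\<forall>j\<in>{0..p}. \<forall>a b. 0 < zc p z w j a b"
  shows "interiorK p z w"
proof -
  have small: "\<forall>\<^sub>F e in at_right 0. (real p + 1) * e < x" if "0 < x" for x :: real
  proof (rule order_tendstoD(2)[OF _ that])
    show "((\<lambda>e. (real p + 1) * e) \<longlongrightarrow> 0) (at_right 0)"
      by (auto intro!: tendsto_eq_intros simp: tendsto_ident_at)
  qed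
  have "\<forall>\<^sub>F e in at_right 0. 0 < e \<and> (real p + 1) * e < z \<and> (real p + 1) * e < 1/2 - z \<and>
      (\<forall>j\<in>{0..p}. \<forall>a b. (real p + 1) * e < zc p z w j a b)"
    using assms by (intro eventually_conj eventually_at_right_less small eventually_ball_finite
        ballI eventually_all_finite) auto
  then obtain e where e: "0 < e" "(real p + 1) * e < z" "(real p + 1) * e < 1/2 - z"
      and ec: "\<forall>j\<in>{0..p}. \<forall>a b. (real p + 1) * e < zc p z w j a b"
    using eventually_happens'[OF trivial_limit_at_right_real] by blast
  show ?thesis
    unfolding interiorK_def
  proof (intro exI[of _ e] conjI allI impI)
    fix z' w'
    assume near: "\<bar>z' - z\<bar> < e \<and> (\<forall>j\<in>{1..p}. \<forall>a b. \<bar>w' j a b - w j a b\<bar> < e)"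
    have zc_nonneg: "0 \<le> zc p z' w' j a b" if "j \<in> {0..p}" for j a b
    proof -
      have "(real p + 1) * e < zc p z w j a b"
        using ec that by blast
      with zc_perturb_bound[of z' z e p w' w j a b] near that show ?thesis
        by (auto simp: abs_le_iff)
    qed
    have "e \<le> (real p + 1) * e"
      using e by simp
    moreover have "z - e < z'" "z' < z + e"
      using near by (auto simp: abs_less_iff)
    ultimately have "0 \<le> z'" "z' \<le> 1/2"
      using e by linarith+
    with zc_nonneg show "inK p z' w'"
      by (simp add: inK_def)
  qed (fact e)
qed

lemma interiorK_iff:
  "interiorK p z w \<longleftrightarrow> 0 < z \<and> z < 1/2 \<and> (\<forall>j\<in>{0..p}. \<forall>a b. 0 < zc p z w j a b)"
  using interiorK_imp_pos pos_imp_interiorK by blast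

section \<open>Stationarity equations\<close>

lemma phi_deriv_along_line:
  assumes A: "\<And>t. Afun d p (Z t) (W t) = A0 + (t - t0) * \<alpha>"
    and c: "\<And>t i a b. zc p (Z t) (W t) i a b = c i a b + (t - t0) * \<gamma> i a b"
    and A0: "0 < A0" "0 < real d / 2 - A0" and c_pos: "\<And>i a b. i \<in> {0..p} \<Longrightarrow> 0 < c i a b"
  shows "((\<lambda>t. phi d p (Z t) (W t)) has_real_derivative
     \<alpha> * (ln A0 - ln (real d / 2 - A0)) +
     (\<Sum>i\<in>{0..p}. \<Sum>a\<in>UNIV. \<Sum>b\<in>UNIV. \<gamma> i a b * (ln (tau d p i) - ln (c i a b) - 1))) (at t0)"
proof -
  have xlnx: "((\<lambda>t. (x + (t - t0) * e) * ln (x + (t - t0) * e))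
      has_real_derivative e * (ln x + 1)) (at t0)"
    if "0 < x" for x e :: real
    using that by (auto intro!: derivative_eq_intros simp: field_simps)
  have entropy: "((\<lambda>t. (x + (t - t0) * e) * L - (x + (t - t0) * e) * ln (x + (t - t0) * e))
      has_real_derivative e * (L - ln x - 1)) (at t0)" if "0 < x" for x e L :: real
  proof (rule DERIV_cong[OF DERIV_diff[OF _ xlnx[OF that]]])
    show "((\<lambda>t. (x + (t - t0) * e) * L) has_real_derivative e * L) (at t0)"
      by (auto intro!: derivative_eq_intros)
  qed (simp add: algebra_simps)
  have B: "real d / 2 - (A0 + (t - t0) * \<alpha>) = (real d / 2 - A0) + (t - t0) * - \<alpha>" for t
    by simp
  have "((\<lambda>t. (A0 + (t - t0) * \<alpha>) * ln (A0 + (t - t0) * \<alpha>)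
      + ((real d / 2 - A0) + (t - t0) * - \<alpha>) * ln ((real d / 2 - A0) + (t - t0) * - \<alpha>)
      + (\<Sum>i\<in>{0..p}. \<Sum>a\<in>UNIV. \<Sum>b\<in>UNIV. (c i a b + (t - t0) * \<gamma> i a b) * ln (tau d p i)
          - (c i a b + (t - t0) * \<gamma> i a b) * ln (c i a b + (t - t0) * \<gamma> i a b)))
    has_real_derivative \<alpha> * (ln A0 + 1) + - \<alpha> * (ln (real d / 2 - A0) + 1)
      + (\<Sum>i\<in>{0..p}. \<Sum>a\<in>UNIV. \<Sum>b\<in>UNIV. \<gamma> i a b * (ln (tau d p i) - ln (c i a b) - 1))) (at t0)"
    using A0 c_pos by (intro DERIV_add DERIV_sum xlnx entropy) auto
  then show ?thesis
    unfolding phi_def Bfun_def A c B by (simp add: algebra_simps)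
qed

lemma Afun_Bfun_pos:
  assumes "interiorK p z w" "2 * p < d"
  shows "0 < Afun d p z w" "0 < Bfun d p z w"
proof -
  define S where "S a b = (\<Sum>j\<in>{1..p}. w j a b)" for a b
  define M where "M a b = (\<Sum>j\<in>{1..p}. real j * w j a b)" for a b
  have z: "0 < z" "z < 1/2" and c: "\<forall>j\<in>{0..p}. \<forall>a b. 0 < zc p z w j a b"
    using assms(1) by (auto simp: interiorK_iff)
  have "0 < w j a b" if "j \<in> {1..p}" for j a b
    using c that by (force simp: zc_def)
  then have M: "0 \<le> M a b" "M a b \<le> real p * S a b" for a b
    unfolding M_def S_def sum_distrib_left
    by (auto intro!: sum_nonneg sum_mono mult_right_mono simp: less_imp_le)
  have "S a a < z" for a
    using c[rule_format, of 0 a a] by (simp add: zc_def S_def)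
  then have diag: "real p * S a a \<le> real p * z" for a
    by (simp add: less_imp_le mult_left_mono)
  have "S a b < 1/2 - z" if "a \<noteq> b" for a b
    using c[rule_format, of 0 a b] that by (simp add: zc_def S_def)
  then have off: "real p * S a b \<le> real p * (1/2 - z)" if "a \<noteq> b" for a b
    using that by (simp add: less_imp_le mult_left_mono)
  have A: "Afun d p z w = real p + (real d - 4 * real p) * z
      + M False False + M True True - M False True - M True False"
    by (simp add: Afun_def M_def sum.distrib sum_subtractf algebra_simps)
  have "0 < (real d - 2 * real p) * z" "0 < (real d - 2 * real p) * (1/2 - z)"
    using assms(2) z by auto
  then show "0 < Afun d p z w" "0 < Bfun d p z w"
    unfolding Bfun_def A
    using M[of False True] M[of True False] M[of False False] M[of True True]
      diag[of False] diag[of True] off[of False True] off[of True False]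
    by (simp_all add: algebra_simps)
qed

lemma sum_coord_delta:
  fixes h :: "nat \<Rightarrow> bool \<Rightarrow> bool \<Rightarrow> real"
  assumes "j \<in> {0..p}"
  shows "(\<Sum>i\<in>{0..p}. \<Sum>a'\<in>UNIV. \<Sum>b'\<in>UNIV.
      (if i = j \<and> a' = a \<and> b' = b then 1 else 0) * h i a' b') = h j a b"
proof -
  have "(\<Sum>a'\<in>UNIV. \<Sum>b'\<in>UNIV. (if i = j \<and> a' = a \<and> b' = b then 1 else 0) * h i a' b')
      = (if i = j then h j a b else 0)" for i
    by (cases a; cases b) (simp_all add: UNIV_bool)
  with assms show ?thesis by simp
qed

lemma phi_deriv_z:
  assumes "interiorK p z w" "2 * p < d"
  shows "((\<lambda>t. phi d p t w) has_real_derivative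
     (real d - 4 * real p) * (ln (Afun d p z w) - ln (Bfun d p z w))
     - ln (zc p z w 0 False False) - ln (zc p z w 0 True True)
     + ln (zc p z w 0 False True) + ln (zc p z w 0 True False)) (at z)"
proof -
  have "(\<Sum>a\<in>UNIV. \<Sum>b\<in>UNIV.
        (if i = 0 then diag_sign a b else 0) * (ln (tau d p i) - ln (zc p z w i a b) - 1))
      = (if i = 0 then ln (zc p z w 0 False True) + ln (zc p z w 0 True False)
           - ln (zc p z w 0 False False) - ln (zc p z w 0 True True) else 0)" for i
    by (cases "i = 0") (simp_all add: UNIV_bool diag_sign_def)
  moreover have "((\<lambda>t. phi d p t w) has_real_derivative
     (real d - 4 * real p) * (ln (Afun d p z w) - ln (real d / 2 - Afun d p z w)) +
     (\<Sum>i\<in>{0..p}. \<Sum>a\<in>UNIV. \<Sum>b\<in>UNIV. (if i = 0 then diag_sign a b else 0) *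
        (ln (tau d p i) - ln (zc p z w i a b) - 1))) (at z)"
    using assms Afun_Bfun_pos[OF assms]
    by (intro phi_deriv_along_line Afun_shift_z zc_shift_z) (auto simp: interiorK_iff Bfun_def)
  ultimately show ?thesis
    by (elim DERIV_cong) (simp add: Bfun_def)
qed

lemma phi_deriv_w:
  assumes "interiorK p z w" "2 * p < d" "j \<in> {1..p}"
  shows "((\<lambda>t. phi d p z (upd w j a b t)) has_real_derivative
     real j * diag_sign a b * (ln (Afun d p z w) - ln (Bfun d p z w))
     + ln (tau d p j) - ln (zc p z w j a b) - ln (tau d p 0) + ln (zc p z w 0 a b)) (at (w j a b))"
proof -
  have "((\<lambda>t. phi d p z (upd w j a b t)) has_real_derivative
     real j * diag_sign a b * (ln (Afun d p z w) - ln (real d / 2 - Afun d p z w)) +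
     (\<Sum>i\<in>{0..p}. \<Sum>a'\<in>UNIV. \<Sum>b'\<in>UNIV.
        ((if i = j \<and> a' = a \<and> b' = b then 1 else 0) - (if i = 0 \<and> a' = a \<and> b' = b then 1 else 0))
        * (ln (tau d p i) - ln (zc p z w i a' b') - 1))) (at (w j a b))"
    using assms Afun_Bfun_pos[OF assms(1,2)]
    by (intro phi_deriv_along_line Afun_upd zc_upd) (auto simp: interiorK_iff Bfun_def)
  then show ?thesis
    using assms(3)
    by (elim DERIV_cong) (simp add: Bfun_def left_diff_distrib sum_subtractf sum_coord_delta)
qed

lemma has_real_derivative_zero_iff:
  "(f has_real_derivative D) (at x) \<Longrightarrow> (f has_real_derivative 0) (at x) \<longleftrightarrow> D = 0"
  by (metis DERIV_unique)

lemma critical_iff: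
  assumes "2 * p < d"
  shows "critical d p z w \<longleftrightarrow> interiorK p z w \<and>
    (real d - 4 * real p) * (ln (Afun d p z w) - ln (Bfun d p z w))
      = ln (zc p z w 0 False False) + ln (zc p z w 0 True True)
        - ln (zc p z w 0 False True) - ln (zc p z w 0 True False) \<and>
    (\<forall>j\<in>{1..p}. \<forall>a b. real j * diag_sign a b * (ln (Afun d p z w) - ln (Bfun d p z w))
      = ln (zc p z w j a b) - ln (tau d p j) - ln (zc p z w 0 a b) + ln (tau d p 0))"
proof (cases "interiorK p z w")
  case True
  show ?thesis
    unfolding critical_def
    using has_real_derivative_zero_iff[OF phi_deriv_z[OF True assms]]
      has_real_derivative_zero_iff[OF phi_deriv_w[OF True assms]]
    by (auto simp: algebra_simps)
qed (simp add: critical_def)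

section \<open>The weights tau and the point z*\<close>

lemma tau_pos: "2 * p \<le> d \<Longrightarrow> j \<le> p \<Longrightarrow> 0 < tau d p j"
  by (simp add: tau_def zero_less_binomial_iff)

lemma sum_tau: "2 * p \<le> d \<Longrightarrow> (\<Sum>j\<in>{0..p}. tau d p j) = real (d choose p) ^ 2"
proof -
  assume "2 * p \<le> d"
  then have "(\<Sum>j\<le>p. (p choose j) * ((d - p) choose (p - j))) = d choose p"
    using vandermonde[of p "d - p" p] by simp
  then have "(\<Sum>j\<le>p. real (p choose j) * real ((d - p) choose (p - j))) = real (d choose p)"
    unfolding of_nat_mult[symmetric] of_nat_sum[symmetric] by (rule arg_cong)
  then show ?thesis
    by (simp add: tau_def atMost_atLeast0 mult.assoc power2_eq_square flip: sum_distrib_left)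
qed

lemma sum_zc_diag: "(\<Sum>j\<in>{0..p}. zc p z w j a a) = z"
  by (simp add: zc_def sum.atLeast_Suc_atMost)

lemma sum_zc_off_diag: "a \<noteq> b \<Longrightarrow> (\<Sum>j\<in>{0..p}. zc p z w j a b) = 1/2 - z"
  by (simp add: zc_def sum.atLeast_Suc_atMost)

lemma Afun_eq_sum_zc:
  "Afun d p z w = real p + (real d - 4 * real p) * z +
     (\<Sum>j\<in>{0..p}. real j * (zc p z w j False False + zc p z w j True True
                             - zc p z w j False True - zc p z w j True False))"
proof -
  have "(\<Sum>j\<in>{0..p}. real j * (zc p z w j False False + zc p z w j True True
                             - zc p z w j False True - zc p z w j True False))
      = (\<Sum>j\<in>{1..p}. real j * (w j False False + w j True True - w j False True - w j True False))"
    by (simp add: sum.atLeast_Suc_atMost zc_def)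
  then show ?thesis
    by (simp add: Afun_def)
qed

lemma critical_z_star:
  assumes "2 * p < d"
  shows "critical d p (1/4) (\<lambda>j a b. tau d p j / (4 * real (d choose p) ^ 2))"
    (is "critical d p (1/4) ?w")
proof -
  define K where "K = 4 * real (d choose p) ^ 2"
  have K: "0 < K"
    using assms by (simp add: K_def)
  have "(\<Sum>i\<in>{1..p}. tau d p i) = real (d choose p) ^ 2 - tau d p 0"
    using sum_tau[of p d] assms by (simp add: sum.atLeast_Suc_atMost)
  then have "(\<Sum>i\<in>{1..p}. ?w i a b) = 1/4 - tau d p 0 / K" for a b
    using K by (simp add: K_def field_simps flip: sum_divide_distrib)
  then have zc: "zc p (1/4) ?w j a b = tau d p j / K" for j a b
    by (simp add: zc_def K_def)
  have pos: "0 < zc p (1/4) ?w j a b" if "j \<in> {0..p}" for j a b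
    using zc tau_pos[of p d j] assms that K by simp
  have "ln (zc p (1/4) ?w j a b) = ln (tau d p j) - ln K" if "j \<in> {0..p}" for j a b
    using zc tau_pos[of p d j] assms that K by (simp add: ln_div)
  moreover have "Afun d p (1/4) ?w = real d / 4"
    by (simp add: Afun_def algebra_simps)
  then have "Bfun d p (1/4) ?w = Afun d p (1/4) ?w"
    unfolding Bfun_def by linarith
  ultimately show ?thesis
    using assms pos by (simp add: critical_iff interiorK_iff)
qed

section \<open>Reduction of a critical point to one polynomial equation\<close>

definition tau_series :: "nat \<Rightarrow> nat \<Rightarrow> (nat \<Rightarrow> real) \<Rightarrow> real \<Rightarrow> real" where
  "tau_series d p f y = (\<Sum>j\<in>{0..p}. f j * tau d p j * y ^ (2 * j))"

definition tau_series_rev :: "nat \<Rightarrow> nat \<Rightarrow> (nat \<Rightarrow> real) \<Rightarrow> real \<Rightarrow> real" where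
  "tau_series_rev d p f y = (\<Sum>j\<in>{0..p}. f j * tau d p j * y ^ (2 * (p - j)))"

lemma tau_series_pos: "2 * p \<le> d \<Longrightarrow> 0 < y \<Longrightarrow> 0 < tau_series d p (\<lambda>_. 1) y"
  unfolding tau_series_def by (intro sum_pos) (auto simp: tau_pos)

lemma tau_series_rev_pos: "2 * p \<le> d \<Longrightarrow> 0 < y \<Longrightarrow> 0 < tau_series_rev d p (\<lambda>_. 1) y"
  unfolding tau_series_rev_def by (intro sum_pos) (auto simp: tau_pos)

lemma tau_series_geometric:
  assumes "\<And>j. j \<in> {0..p} \<Longrightarrow> x j * t = c * tau d p j * y ^ (2 * j)"
  shows "(\<Sum>j\<in>{0..p}. f j * x j) * t = c * tau_series d p f y"
proof -
  have "(\<Sum>j\<in>{0..p}. f j * x j) * t = (\<Sum>j\<in>{0..p}. c * (f j * tau d p j * y ^ (2 * j)))"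
    unfolding sum_distrib_right using assms by (intro sum.cong) (simp_all flip: mult.assoc)
  then show ?thesis
    by (simp add: tau_series_def sum_distrib_left)
qed

lemma tau_series_rev_geometric:
  assumes "\<And>j. j \<in> {0..p} \<Longrightarrow> x j * t * y ^ (2 * j) = c * tau d p j"
  shows "(\<Sum>j\<in>{0..p}. f j * x j) * t * y ^ (2 * p) = c * tau_series_rev d p f y"
proof -
  have "f j * x j * t * y ^ (2 * p) = c * (f j * tau d p j * y ^ (2 * (p - j)))" if "j \<in> {0..p}" for j
  proof -
    have "2 * p = 2 * j + 2 * (p - j)"
      using that by simp
    then have "y ^ (2 * p) = y ^ (2 * j) * y ^ (2 * (p - j))"
      by (metis power_add)
    then show ?thesis
      using assms[OF that] by (simp add: algebra_simps)
  qed
  then show ?thesis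
    unfolding tau_series_rev_def sum_distrib_left sum_distrib_right by (intro sum.cong) auto
qed

lemma ln_diff_eq_of_sq_ratio:
  fixes A B y :: real
  assumes "0 < A" "0 < B" "0 < y" "y ^ 2 = A / B"
  shows "ln A - ln B = 2 * ln y"
proof -
  have "2 * ln y = ln (A / B)"
    using assms by (metis ln_realpow of_nat_numeral)
  then show ?thesis
    using assms by (simp add: ln_divide_pos)
qed

lemma critical_coord_ratios:
  assumes crit: "critical d p z w" and dp: "2 * p < d"
    and y: "0 < y" "y ^ 2 = Afun d p z w / Bfun d p z w" and j: "j \<in> {0..p}"
  shows "zc p z w j a a * tau d p 0 = zc p z w 0 a a * tau d p j * y ^ (2 * j)"
    and "a \<noteq> b \<Longrightarrow> zc p z w j a b * tau d p 0 * y ^ (2 * j) = zc p z w 0 a b * tau d p j"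
proof -
  have int: "interiorK p z w"
    and eq: "\<And>a b. j \<in> {1..p} \<Longrightarrow>
      real j * diag_sign a b * (ln (Afun d p z w) - ln (Bfun d p z w))
      = ln (zc p z w j a b) - ln (tau d p j) - ln (zc p z w 0 a b) + ln (tau d p 0)"
    using crit dp by (auto simp: critical_iff)
  have pos: "0 < zc p z w j a b" "0 < zc p z w 0 a b" "0 < tau d p j" "0 < tau d p 0" for a b
    using int j dp by (auto simp: interiorK_iff intro: tau_pos)
  have L: "ln (Afun d p z w) - ln (Bfun d p z w) = 2 * ln y"
    using Afun_Bfun_pos[OF int dp] y by (rule ln_diff_eq_of_sq_ratio)
  have eq': "real j * diag_sign a b * (2 * ln y)
      = ln (zc p z w j a b) - ln (tau d p j) - ln (zc p z w 0 a b) + ln (tau d p 0)" for a b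
  proof (cases "j = 0")
    case False
    with j eq[of a b] L show ?thesis by simp
  qed simp
  have "ln (zc p z w j a a * tau d p 0) = ln (zc p z w 0 a a * tau d p j * y ^ (2 * j))"
    using eq'[of a a] pos y by (simp add: ln_mult_pos ln_realpow diag_sign_def)
  then show "zc p z w j a a * tau d p 0 = zc p z w 0 a a * tau d p j * y ^ (2 * j)"
    using pos y by (simp add: ln_inj_iff)
  show "zc p z w j a b * tau d p 0 * y ^ (2 * j) = zc p z w 0 a b * tau d p j" if "a \<noteq> b"
  proof -
    have "ln (zc p z w j a b * tau d p 0 * y ^ (2 * j)) = ln (zc p z w 0 a b * tau d p j)"
      using eq'[of a b] pos y that by (simp add: ln_mult_pos ln_realpow diag_sign_def)
    then show ?thesis
      using pos y by (simp add: ln_inj_iff)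
  qed
qed

lemma critical_coords_geometric:
  assumes crit: "critical d p z w" and dp: "2 * p < d"
    and y: "0 < y" "y ^ 2 = Afun d p z w / Bfun d p z w"
  obtains \<alpha> \<beta> where "0 < \<alpha>" "0 < \<beta>" "\<alpha> * y ^ (4 * p) = \<beta> * y ^ d"
    "\<And>j a. j \<in> {0..p} \<Longrightarrow> zc p z w j a a * tau d p 0 = \<alpha> * tau d p j * y ^ (2 * j)"
    "\<And>j a b. j \<in> {0..p} \<Longrightarrow> a \<noteq> b \<Longrightarrow>
      zc p z w j a b * tau d p 0 * y ^ (2 * j) = \<beta> * tau d p j"
proof -
  note ratios = critical_coord_ratios[OF crit dp y]
  have int: "interiorK p z w"
    and eq: "(real d - 4 * real p) * (ln (Afun d p z w) - ln (Bfun d p z w))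
      = ln (zc p z w 0 False False) + ln (zc p z w 0 True True)
        - ln (zc p z w 0 False True) - ln (zc p z w 0 True False)"
    using crit dp by (auto simp: critical_iff)
  have pos: "0 < zc p z w 0 a b" for a b
    using int by (simp add: interiorK_iff)
  have S: "0 < tau_series d p (\<lambda>_. 1) y" "0 < tau_series_rev d p (\<lambda>_. 1) y"
    using dp y by (simp_all add: tau_series_pos tau_series_rev_pos)
  have diag_sum: "zc p z w 0 a a * tau_series d p (\<lambda>_. 1) y = z * tau d p 0" for a
    using tau_series_geometric[of p "\<lambda>j. zc p z w j a a", OF ratios(1), of "\<lambda>_. 1"]
    by (simp add: sum_zc_diag)
  have diag: "zc p z w 0 a a = zc p z w 0 False False" for a
    using diag_sum[of a] diag_sum[of False] S(1) by (metis mult_cancel_right less_irrefl)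
  have off_sum: "zc p z w 0 a b * tau_series_rev d p (\<lambda>_. 1) y = (1/2 - z) * tau d p 0 * y ^ (2 * p)"
    if "a \<noteq> b" for a b
    using tau_series_rev_geometric[of p "\<lambda>j. zc p z w j a b", OF ratios(2)[OF _ that], of "\<lambda>_. 1"]
    by (simp add: sum_zc_off_diag that)
  have off: "zc p z w 0 a b = zc p z w 0 False True" if "a \<noteq> b" for a b
    using off_sum[OF that] off_sum[of False True] S(2) by (metis mult_cancel_right less_irrefl)
  have "ln (zc p z w 0 False False * y ^ (4 * p)) = ln (zc p z w 0 False True * y ^ d)"
    using eq diag[of True] off[of True False] pos y
      ln_diff_eq_of_sq_ratio[OF Afun_Bfun_pos[OF int dp] y]
    by (simp add: ln_mult_pos ln_realpow algebra_simps)
  then have "zc p z w 0 False False * y ^ (4 * p) = zc p z w 0 False True * y ^ d"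
    using pos y by simp
  then show ?thesis
  proof (rule that[OF pos pos])
    show "zc p z w j a a * tau d p 0 = zc p z w 0 False False * tau d p j * y ^ (2 * j)"
      if "j \<in> {0..p}" for j a
      using ratios(1)[OF that, of a] diag[of a] by simp
    show "zc p z w j a b * tau d p 0 * y ^ (2 * j) = zc p z w 0 False True * tau d p j"
      if "j \<in> {0..p}" "a \<noteq> b" for j a b
      using ratios(2)[OF that] off[OF that(2)] by simp
  qed
qed

definition mass_poly :: "nat \<Rightarrow> nat \<Rightarrow> real \<Rightarrow> real" where
  "mass_poly d p y = y ^ d * tau_series d p (\<lambda>_. 1) y + y ^ (2 * p) * tau_series_rev d p (\<lambda>_. 1) y"

definition moment_poly :: "nat \<Rightarrow> nat \<Rightarrow> real \<Rightarrow> real" where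
  "moment_poly d p y = (real d - 4 * real p) * y ^ d * tau_series d p (\<lambda>_. 1) y
     + 2 * y ^ d * tau_series d p real y - 2 * y ^ (2 * p) * tau_series_rev d p real y"

definition critical_poly :: "nat \<Rightarrow> nat \<Rightarrow> real \<Rightarrow> real" where
  "critical_poly d p y = (1 + y ^ 2) * (2 * real p * mass_poly d p y + moment_poly d p y)
     - y ^ 2 * real d * mass_poly d p y"

lemma critical_mass_moment:
  assumes crit: "critical d p z w" and dp: "2 * p < d"
    and y: "0 < y" "y ^ 2 = Afun d p z w / Bfun d p z w"
  obtains \<beta> where "0 < \<beta>"
    "\<beta> * mass_poly d p y = y ^ (4 * p) * tau d p 0 / 2"
    "\<beta> * moment_poly d p y = y ^ (4 * p) * tau d p 0 * (Afun d p z w - real p)"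
proof -
  define t0 where "t0 = tau d p 0"
  define Y where "Y = y ^ (2 * p)"
  define yd where "yd = y ^ d"
  define M where "M a b = (\<Sum>j\<in>{0..p}. real j * zc p z w j a b)" for a b
  obtain \<alpha> \<beta> where "0 < \<beta>" and \<alpha>\<beta>: "\<alpha> * y ^ (4 * p) = \<beta> * y ^ d"
    and diag: "\<And>j a. j \<in> {0..p} \<Longrightarrow> zc p z w j a a * t0 = \<alpha> * tau d p j * y ^ (2 * j)"
    and off: "\<And>j a b. j \<in> {0..p} \<Longrightarrow> a \<noteq> b \<Longrightarrow>
      zc p z w j a b * t0 * y ^ (2 * j) = \<beta> * tau d p j"
    using critical_coords_geometric[OF crit dp y] unfolding t0_def by metis
  have YY: "y ^ (4 * p) = Y ^ 2"
    by (simp add: Y_def flip: power_mult)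
  have z: "z * t0 = \<alpha> * tau_series d p (\<lambda>_. 1) y"
    using tau_series_geometric[of p "\<lambda>j. zc p z w j False False" t0 \<alpha> d y "\<lambda>_. 1", OF diag]
    by (simp add: sum_zc_diag)
  have h: "(1/2 - z) * t0 * Y = \<beta> * tau_series_rev d p (\<lambda>_. 1) y"
    using tau_series_rev_geometric[of p "\<lambda>j. zc p z w j False True" t0 y \<beta> d "\<lambda>_. 1", OF off]
    by (simp add: sum_zc_off_diag Y_def)
  have diagM: "M a a * t0 = \<alpha> * tau_series d p real y" for a
    using tau_series_geometric[of p "\<lambda>j. zc p z w j a a" t0 \<alpha> d y real, OF diag]
    by (simp add: M_def)
  have offM: "M a b * t0 * Y = \<beta> * tau_series_rev d p real y" if "a \<noteq> b" for a b
    using tau_series_rev_geometric[of p "\<lambda>j. zc p z w j a b" t0 y \<beta> d real, OF off[OF _ that]]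
    by (simp add: Y_def M_def)
  have A: "Afun d p z w = real p + (real d - 4 * real p) * z
      + M False False + M True True - M False True - M True False"
    by (simp add: M_def Afun_eq_sum_zc sum.distrib sum_subtractf algebra_simps)
  have \<alpha>\<beta>': "\<alpha> * Y ^ 2 = \<beta> * yd"
    using \<alpha>\<beta> by (simp add: YY yd_def)
  show ?thesis
  proof (rule that[OF \<open>0 < \<beta>\<close>])
    show "\<beta> * mass_poly d p y = y ^ (4 * p) * tau d p 0 / 2"
      unfolding mass_poly_def YY t0_def[symmetric] Y_def[symmetric] yd_def[symmetric]
      using \<alpha>\<beta>' z h by algebra
    show "\<beta> * moment_poly d p y = y ^ (4 * p) * tau d p 0 * (Afun d p z w - real p)"
      unfolding moment_poly_def YY t0_def[symmetric] Y_def[symmetric] yd_def[symmetric]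
      using \<alpha>\<beta>' z diagM[of False] diagM[of True]
        offM[of False True, simplified] offM[of True False, simplified] A
      by algebra
  qed
qed

lemma critical_poly_sqrt_ratio:
  assumes crit: "critical d p z w" and dp: "2 * p < d"
  shows "critical_poly d p (sqrt (Afun d p z w / Bfun d p z w)) = 0"
proof -
  define y where "y = sqrt (Afun d p z w / Bfun d p z w)"
  define Y2 where "Y2 = y ^ (4 * p)"
  have AB: "0 < Afun d p z w" "0 < Bfun d p z w"
    using Afun_Bfun_pos crit dp by (auto simp: critical_def)
  then have y: "0 < y" "y ^ 2 = Afun d p z w / Bfun d p z w"
    by (simp_all add: y_def)
  then have A: "Afun d p z w * (1 + y ^ 2) = y ^ 2 * real d / 2"
    using AB by (simp add: Bfun_def field_simps)
  obtain \<beta> where "0 < \<beta>"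
    and "\<beta> * mass_poly d p y = Y2 * tau d p 0 / 2"
    and "\<beta> * moment_poly d p y = Y2 * tau d p 0 * (Afun d p z w - real p)"
    using critical_mass_moment[OF crit dp y] unfolding Y2_def by metis
  with A have "\<beta> * critical_poly d p y = 0"
    unfolding critical_poly_def by algebra
  with \<open>0 < \<beta>\<close> show ?thesis
    by (simp add: y_def)
qed

lemma critical_eq_star_of_Afun_eq_Bfun:
  assumes crit: "critical d p z w" and dp: "2 * p < d" and AB: "Afun d p z w = Bfun d p z w"
  shows "z = 1/4 \<and> (\<forall>j\<in>{1..p}. \<forall>a b. w j a b = tau d p j / (4 * real (d choose p) ^ 2))"
proof -
  define t0 where "t0 = tau d p 0"
  define C where "C = real (d choose p) ^ 2"
  have "0 < Bfun d p z w" "0 < t0"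
    using Afun_Bfun_pos crit dp by (auto simp: critical_def t0_def tau_pos)
  then have y: "(1::real) ^ 2 = Afun d p z w / Bfun d p z w"
    using AB by simp
  obtain \<alpha> \<beta> where "0 < \<alpha>" "0 < \<beta>" "\<alpha> * 1 ^ (4 * p) = \<beta> * 1 ^ d"
    and diag: "\<And>j a. j \<in> {0..p} \<Longrightarrow> zc p z w j a a * t0 = \<alpha> * tau d p j * 1 ^ (2 * j)"
    and off: "\<And>j a b. j \<in> {0..p} \<Longrightarrow> a \<noteq> b \<Longrightarrow>
      zc p z w j a b * t0 * 1 ^ (2 * j) = \<beta> * tau d p j"
    using critical_coords_geometric[OF crit dp zero_less_one y] unfolding t0_def by metis
  then have coord: "zc p z w j a b * t0 = \<alpha> * tau d p j" if "j \<in> {0..p}" for j a b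
    using that by (cases "a = b") auto
  have sums: "(\<Sum>j\<in>{0..p}. zc p z w j a b) * t0 = \<alpha> * C" for a b
    using coord sum_tau[of p d] dp by (simp add: C_def sum_distrib_right flip: sum_distrib_left)
  have "z * t0 = \<alpha> * C" "(1/2 - z) * t0 = \<alpha> * C"
    using sums[of False False] sums[of False True] by (simp_all add: sum_zc_diag sum_zc_off_diag)
  then have "(4 * z - 1) * t0 = 0"
    by algebra
  then have z: "z = 1/4"
    using \<open>0 < t0\<close> by simp
  with \<open>z * t0 = \<alpha> * C\<close> have \<alpha>: "\<alpha> * C = t0 / 4"
    by simp
  have "w j a b = tau d p j / (4 * C)" if "j \<in> {1..p}" for j a b
  proof -
    have "w j a b * t0 * C = t0 * tau d p j / 4"
      using coord[of j a b] that \<alpha> by (simp add: zc_def algebra_simps)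
    moreover have "0 < C"
      using dp by (simp add: C_def)
    ultimately show ?thesis
      using \<open>0 < t0\<close> by (simp add: field_simps)
  qed
  with z show ?thesis
    by (simp add: C_def)
qed

section \<open>The five cases\<close>

lemma critical_poly_6_1_root:
  fixes y :: real
  assumes "0 < y" "critical_poly 6 1 y = 0"
  shows "y = 1"
proof -
  define q where "q = (1 + y) * (2 * y + (y - 1) ^ 2)"
  have range: "{0..1::nat} = {0, 1}"
    by auto
  have "critical_poly 6 1 y = 24 * (1 - y) * y ^ 4 * q"
    by (simp add: critical_poly_def mass_poly_def moment_poly_def tau_series_def tau_series_rev_def
        tau_def binomial_fact' fact_numeral range q_def) algebra
  moreover have "0 < q"
    unfolding q_def using assms(1)
    by (intro add_pos_nonneg mult_pos_pos mult_nonneg_nonneg zero_less_power) auto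
  ultimately show ?thesis
    using assms by simp
qed

lemma critical_poly_10_2_root:
  fixes y :: real
  assumes "0 < y" "critical_poly 10 2 y = 0"
  shows "y = 1"
proof -
  define q where "q = (1 + y) * (28 * y ^ 3 + 102 * (y - 1) ^ 2 * y ^ 2 + 66 * (y - 1) ^ 4 * y
    + 11 * (y - 1) ^ 6)"
  have range: "{0..2::nat} = {0, 1, 2}"
    by auto
  have "critical_poly 10 2 y = 90 * (1 - y) * y ^ 6 * q"
    by (simp add: critical_poly_def mass_poly_def moment_poly_def tau_series_def tau_series_rev_def
        tau_def binomial_fact' fact_numeral range q_def) algebra
  moreover have "0 < q"
    unfolding q_def using assms(1)
    by (intro add_pos_nonneg mult_pos_pos mult_nonneg_nonneg zero_less_power) auto
  ultimately show ?thesis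
    using assms by simp
qed

lemma critical_poly_13_3_root:
  fixes y :: real
  assumes "0 < y" "critical_poly 13 3 y = 0"
  shows "y = 1"
proof -
  define q where "q = 1342 * y ^ 5 + 5030 * (y - 1) ^ 2 * y ^ 4 + 5089 * (y - 1) ^ 4 * y ^ 3
    + 2278 * (y - 1) ^ 6 * y ^ 2 + 517 * (y - 1) ^ 8 * y + 47 * (y - 1) ^ 10"
  have range: "{0..3::nat} = {0, 1, 2, 3}"
    by auto
  have "critical_poly 13 3 y = 286 * (1 - y) * y ^ 8 * q"
    by (simp add: critical_poly_def mass_poly_def moment_poly_def tau_series_def tau_series_rev_def
        tau_def binomial_fact' fact_numeral range q_def) algebra
  moreover have "0 < q"
    unfolding q_def using assms(1)
    by (intro add_pos_nonneg mult_pos_pos mult_nonneg_nonneg zero_less_power) auto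
  ultimately show ?thesis
    using assms by simp
qed

lemma critical_poly_14_3_root:
  fixes y :: real
  assumes "0 < y" "critical_poly 14 3 y = 0"
  shows "y = 1"
proof -
  define q where "q = (1 + y) * (12 * y ^ 5 + 950 * (y - 1) ^ 2 * y ^ 4 + 1124 * (y - 1) ^ 4 * y ^ 3
    + 534 * (y - 1) ^ 6 * y ^ 2 + 130 * (y - 1) ^ 8 * y + 13 * (y - 1) ^ 10)"
  have range: "{0..3::nat} = {0, 1, 2, 3}"
    by auto
  have "critical_poly 14 3 y = 1456 * (1 - y) * y ^ 8 * q"
    by (simp add: critical_poly_def mass_poly_def moment_poly_def tau_series_def tau_series_rev_def
        tau_def binomial_fact' fact_numeral range q_def) algebra
  moreover have "0 < q"
    unfolding q_def using assms(1)
    by (intro add_pos_nonneg mult_pos_pos mult_nonneg_nonneg zero_less_power) auto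
  ultimately show ?thesis
    using assms by simp
qed

lemma critical_poly_17_4_root:
  fixes y :: real
  assumes "0 < y" "critical_poly 17 4 y = 0"
  shows "y = 1"
proof -
  define q where "q = 1540 * y ^ 7 + 25432 * (y - 1) ^ 2 * y ^ 6 + 40810 * (y - 1) ^ 4 * y ^ 5
    + 29326 * (y - 1) ^ 6 * y ^ 4 + 11979 * (y - 1) ^ 8 * y ^ 3
    + 2974 * (y - 1) ^ 10 * y ^ 2 + 435 * (y - 1) ^ 12 * y + 29 * (y - 1) ^ 14"
  have range: "{0..4::nat} = {0, 1, 2, 3, 4}"
    by auto
  have "critical_poly 17 4 y = 7140 * (1 - y) * y ^ 10 * q"
    by (simp add: critical_poly_def mass_poly_def moment_poly_def tau_series_def tau_series_rev_def
        tau_def binomial_fact' fact_numeral range q_def) algebra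
  moreover have "0 < q"
    unfolding q_def using assms(1)
    by (intro add_pos_nonneg mult_pos_pos mult_nonneg_nonneg zero_less_power) auto
  ultimately show ?thesis
    using assms by simp
qed

theorem lemmaA2:
  fixes d p :: nat
  assumes "(d, p) \<in> {(6, 1), (10, 2), (13, 3), (14, 3), (17, 4)}"
  shows "critical d p (1/4) (\<lambda>j a b. tau d p j / (4 * real (d choose p) ^ 2))
    \<and> (\<forall>z w. critical d p z w \<longrightarrow>
         z = 1/4 \<and> (\<forall>j\<in>{1..p}. \<forall>a b. w j a b = tau d p j / (4 * real (d choose p) ^ 2)))"
proof -
  have dp: "2 * p < d"
    using assms by auto
  have "z = 1/4 \<and> (\<forall>j\<in>{1..p}. \<forall>a b. w j a b = tau d p j / (4 * real (d choose p) ^ 2))"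
    if crit: "critical d p z w" for z w
  proof -
    define y where "y = sqrt (Afun d p z w / Bfun d p z w)"
    have AB: "0 < Afun d p z w" "0 < Bfun d p z w"
      using Afun_Bfun_pos crit dp by (auto simp: critical_def)
    then have "0 < y"
      by (simp add: y_def)
    moreover have "critical_poly d p y = 0"
      unfolding y_def using crit dp by (rule critical_poly_sqrt_ratio)
    ultimately have "y = 1"
      using assms critical_poly_6_1_root critical_poly_10_2_root critical_poly_13_3_root
        critical_poly_14_3_root critical_poly_17_4_root
      by auto
    then have "Afun d p z w = Bfun d p z w"
      using AB by (simp add: y_def)
    then show ?thesis
      by (rule critical_eq_star_of_Afun_eq_Bfun[OF crit dp])
  qed
  with critical_z_star[OF dp] show ?thesis
    by blast
qed

end
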